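(* Let $n\ge k\ge1$ be integers, $i\in\{1,\ldots,n\}$, and let $H\sim\text{Hyp}(n,i,k)$ and $X\sim\text{Bin}(k, \frac{i}{n})$. Let $H^{\ast}$ denote the random variable $H$ conditioned on the event $\{H\ge ik/n\}$, and $X^{\ast}$ the random variable $X$ conditioned on the event $\{X\ge ik/n\}$. Then $H^{\ast}\le_{st} X^{\ast}$. In particular, \[ \mathbb{E}(H\mid H\ge \mathbb{E}(H)) \le \mathbb{E}(X\mid X\ge \mathbb{E}(X) ). \]
   Context: $\text{Hyp}(n,i,k)$ denotes the hypergeometric distribution: the number of black marbles in a sample without replacement of size $k$ from an urn with $i$ black and $n-i$ white marbles, i.e. $\mathbb{P}(H=j)=\binom{i}{j}\binom{n-i}{k-j}/\binom{n}{k}$, with mean $ik/n$. $\text{Bin}(k,p)$ is the binomial distribution. For random variables $U,V$, $U\le_{st}V$ (usual stochastic order) means $\mathbb{P}(U\ge t)\le\mathbb{P}(V\ge t)$ for all $t\in\mathbb{R}$. *)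

theory Defs
  imports "HOL-Probability.Probability"
begin

definition hyp_pmf :: "nat \<Rightarrow> nat \<Rightarrow> nat \<Rightarrow> nat pmf" where
  "hyp_pmf n i k = map_pmf (\<lambda>S. card (S \<inter> {..<i}))
       (pmf_of_set {S. S \<subseteq> {..<n} \<and> card S = k})"

definition st_le :: "nat pmf \<Rightarrow> nat pmf \<Rightarrow> bool" where
  "st_le U V \<longleftrightarrow> (\<forall>t::real. measure_pmf.prob U {x. real x \<ge> t} \<le> measure_pmf.prob V {x. real x \<ge> t})"

end

(* Let h and b be the probability mass functions of H and X, and p = i/n; both
   distributions have mean ik/n. The quotients of consecutive masses are
     h(j+1)/h(j) = (k-j)(i-j) / ((j+1)(n-i-k+j+1)),   b(j+1)/b(j) = (k-j)p / ((j+1)(1-p)),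
   and the first is at most the second as soon as j >= ik/n. Chaining these
   comparisons, b/h is nondecreasing on A = {j >= ik/n}: X dominates H in the
   likelihood ratio order on A. A Chebyshev-type sum inequality turns this into
   E(f(H) | A) <= E(f(X) | A) for every nondecreasing f; the indicator of [t, oo)
   gives the stochastic order, the identity the inequality of conditional means. *)

theory Submission
  imports Defs
begin

lemma Suc_times_binomial_diff: "Suc j * (m choose Suc j) = (m - j) * (m choose j)"
  by (metis binomial_absorption binomial_absorb_comp)

lemma sum_times_choose_vandermonde:
  "(\<Sum>j\<le>Suc r. j * ((m choose j) * (N choose (Suc r - j)))) = m * ((m - 1 + N) choose r)"
proof -
  have "(\<Sum>j\<le>Suc r. j * ((m choose j) * (N choose (Suc r - j))))
        = (\<Sum>j\<le>r. (Suc j * (m choose Suc j)) * (N choose (r - j)))"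
    by (subst sum.atMost_Suc_shift) (simp add: algebra_simps del: binomial_Suc_Suc)
  also have "\<dots> = m * (\<Sum>j\<le>r. ((m - 1) choose j) * (N choose (r - j)))"
    by (simp only: binomial_absorption) (simp add: sum_distrib_left mult_ac)
  also have "\<dots> = m * ((m - 1 + N) choose r)"
    by (simp only: vandermonde)
  finally show ?thesis .
qed

lemma card_subsets_Int_eq:
  assumes "finite U" "B \<subseteq> U" "j \<le> k"
  shows "card {S. S \<subseteq> U \<and> card S = k \<and> card (S \<inter> B) = j}
         = (card B choose j) * ((card U - card B) choose (k - j))"
proof -
  let ?T = "{S. S \<subseteq> U \<and> card S = k \<and> card (S \<inter> B) = j}"
  let ?P = "{P. P \<subseteq> B \<and> card P = j} \<times> {Q. Q \<subseteq> U - B \<and> card Q = k - j}"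
  have "bij_betw (\<lambda>S. (S \<inter> B, S - B)) ?T ?P"
  proof (rule bij_betw_byWitness[where f' = "\<lambda>(P, Q). P \<union> Q"])
    show "\<forall>S\<in>?T. (\<lambda>(P, Q). P \<union> Q) (S \<inter> B, S - B) = S" by auto
    show "\<forall>PQ\<in>?P. (\<lambda>S. (S \<inter> B, S - B)) ((\<lambda>(P, Q). P \<union> Q) PQ) = PQ" by auto
    show "(\<lambda>S. (S \<inter> B, S - B)) ` ?T \<subseteq> ?P"
    proof (rule image_subsetI)
      fix S assume S: "S \<in> ?T"
      then have "finite S" using rev_finite_subset[OF assms(1)] by blast
      then have "card S = card (S \<inter> B) + card (S - B)" by (rule card_Int_Diff)
      with S show "(S \<inter> B, S - B) \<in> ?P" by auto
    qed
    show "(\<lambda>(P, Q). P \<union> Q) ` ?P \<subseteq> ?T"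
    proof (rule image_subsetI)
      fix PQ assume "PQ \<in> ?P"
      then obtain P Q where PQ: "PQ = (P, Q)" "P \<subseteq> B" "Q \<subseteq> U - B" "card P = j" "card Q = k - j"
        by auto
      then have "finite P" "finite Q"
        using assms by (meson Diff_subset rev_finite_subset subset_trans)+
      moreover have "P \<inter> Q = {}" "(P \<union> Q) \<inter> B = P" using PQ by auto
      ultimately show "(\<lambda>(P, Q). P \<union> Q) PQ \<in> ?T"
        using PQ assms card_Un_disjoint[of P Q] by auto
    qed
  qed
  then have "card ?T = card ?P" by (rule bij_betw_same_card)
  also have "\<dots> = (card B choose j) * ((card U - card B) choose (k - j))"
    using assms by (simp add: card_cartesian_product n_subsets finite_subset card_Diff_subset)
  finally show ?thesis .
qed

lemma finite_card_subsets: "finite {S. S \<subseteq> {..<n::nat} \<and> card S = k}"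
  by (rule finite_subset[of _ "Pow {..<n}"]) auto

lemma card_subsets_nonempty: "k \<le> n \<Longrightarrow> {S. S \<subseteq> {..<n::nat} \<and> card S = k} \<noteq> {}"
  by (metis (mono_tags, lifting) card_lessThan empty_iff lessThan_subset_iff mem_Collect_eq)

lemma set_pmf_hyp_pmf:
  "k \<le> n \<Longrightarrow> set_pmf (hyp_pmf n i k) = (\<lambda>S. card (S \<inter> {..<i})) ` {S. S \<subseteq> {..<n} \<and> card S = k}"
  unfolding hyp_pmf_def using finite_card_subsets card_subsets_nonempty by simp

lemma set_pmf_hyp_pmf_subset: "k \<le> n \<Longrightarrow> set_pmf (hyp_pmf n i k) \<subseteq> {..k}"
  unfolding set_pmf_hyp_pmf
  by (auto intro!: card_mono dest: rev_finite_subset[OF finite_lessThan])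

lemma hyp_pmf_all_black: "k \<le> n \<Longrightarrow> hyp_pmf n n k = return_pmf k"
  by (auto simp: set_pmf_subset_singleton[symmetric] set_pmf_hyp_pmf Int_absorb2)

lemma pmf_hyp_pmf:
  assumes "i \<le> n" "k \<le> n" "j \<le> k"
  shows "pmf (hyp_pmf n i k) j = real ((i choose j) * ((n - i) choose (k - j))) / real (n choose k)"
proof -
  let ?U = "{S. S \<subseteq> {..<n} \<and> card S = k}"
  have "?U \<inter> (\<lambda>S. card (S \<inter> {..<i})) -` {j} = {S. S \<subseteq> {..<n} \<and> card S = k \<and> card (S \<inter> {..<i}) = j}"
    by auto
  then have "pmf (hyp_pmf n i k) j = card {S. S \<subseteq> {..<n} \<and> card S = k \<and> card (S \<inter> {..<i}) = j} / card ?U"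
    unfolding hyp_pmf_def pmf_map
    using measure_pmf_of_set[OF card_subsets_nonempty[OF assms(2)] finite_card_subsets] by simp
  then show ?thesis
    using assms card_subsets_Int_eq[of "{..<n}" "{..<i}" j k] n_subsets[of "{..<n}" k] by simp
qed

lemma expectation_hyp_pmf:
  assumes "i \<le> n" "k \<le> n"
  shows "measure_pmf.expectation (hyp_pmf n i k) real = real i * real k / real n"
proof (cases k)
  case 0
  then have "set_pmf (hyp_pmf n i k) \<subseteq> {0}"
    using set_pmf_hyp_pmf_subset[OF assms(2)] by simp
  then show ?thesis
    using 0 by (simp add: set_pmf_subset_singleton)
next
  case (Suc r)
  have "measure_pmf.expectation (hyp_pmf n i k) real = (\<Sum>j\<le>k. real j * pmf (hyp_pmf n i k) j)"
    using set_pmf_hyp_pmf_subset[OF assms(2)] by (intro integral_measure_pmf_real) auto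
  also have "\<dots> = real (\<Sum>j\<le>k. j * ((i choose j) * ((n - i) choose (k - j)))) / real (n choose k)"
    using assms by (simp add: pmf_hyp_pmf sum_divide_distrib)
  also have "\<dots> = real (i * ((i - 1 + (n - i)) choose r)) / real (n choose k)"
    by (simp only: Suc sum_times_choose_vandermonde)
  also have "i * ((i - 1 + (n - i)) choose r) = i * ((n - 1) choose r)"
    using assms by (cases "i = 0") simp_all
  also have "real (i * ((n - 1) choose r)) / real (n choose k) = real i * real k / real n"
  proof -
    have absorb: "real n * real ((n - 1) choose r) = real k * real (n choose k)"
      using times_binomial_minus1_eq[of k n] Suc by (metis of_nat_mult diff_Suc_1 zero_less_Suc)
    have "0 < real n" "0 < real (n choose k)"
      using assms Suc by simp_all
    then have "real (i * ((n - 1) choose r)) / real (n choose k)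
               = real i * (real n * real ((n - 1) choose r)) / (real n * real (n choose k))"
      by simp
    also have "\<dots> = real i * real k / real n"
      using \<open>0 < real (n choose k)\<close> by (simp only: absorb) simp
    finally show ?thesis .
  qed
  finally show ?thesis .
qed

lemma hyp_pmf_Suc_ratio:
  assumes "i \<le> n" "k \<le> n" "j < k"
  shows "pmf (hyp_pmf n i k) (Suc j) * real (Suc j) * real (n - i + Suc j - k)
         = pmf (hyp_pmf n i k) j * real (k - j) * real (i - j)"
proof -
  define N r where "N = n - i" and "r = k - Suc j"
  have k: "k - j = Suc r" "n - i + Suc j - k = N - r"
    using assms unfolding N_def r_def by auto
  have "(i choose Suc j) * (N choose r) * Suc j * (N - r)
        = (Suc j * (i choose Suc j)) * ((N - r) * (N choose r))"
    by (simp only: mult_ac)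
  also have "\<dots> = ((i - j) * (i choose j)) * (Suc r * (N choose Suc r))"
    using Suc_times_binomial_diff[of j i] Suc_times_binomial_diff[of r N] by (simp only:)
  also have "\<dots> = (i choose j) * (N choose Suc r) * Suc r * (i - j)"
    by (simp only: mult_ac)
  finally have choose_eq: "(i choose Suc j) * (N choose r) * Suc j * (N - r)
                           = (i choose j) * (N choose Suc r) * Suc r * (i - j)" .
  have hyp_Suc: "pmf (hyp_pmf n i k) (Suc j) = real ((i choose Suc j) * (N choose r)) / real (n choose k)"
    using assms pmf_hyp_pmf[of i n k "Suc j"] unfolding N_def r_def by simp
  have hyp: "pmf (hyp_pmf n i k) j = real ((i choose j) * (N choose Suc r)) / real (n choose k)"
    using assms pmf_hyp_pmf[of i n k j] k(1) unfolding N_def by simp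
  have "pmf (hyp_pmf n i k) (Suc j) * real (Suc j) * real (N - r)
        = real ((i choose Suc j) * (N choose r) * Suc j * (N - r)) / real (n choose k)"
    using hyp_Suc by (simp only: of_nat_mult times_divide_eq_left)
  also have "\<dots> = real ((i choose j) * (N choose Suc r) * Suc r * (i - j)) / real (n choose k)"
    by (simp only: choose_eq)
  also have "\<dots> = pmf (hyp_pmf n i k) j * real (Suc r) * real (i - j)"
    using hyp by (simp only: of_nat_mult times_divide_eq_left)
  finally show ?thesis unfolding k .
qed

lemma binomial_pmf_1: "binomial_pmf k 1 = return_pmf k"
  by (simp flip: set_pmf_subset_singleton)

lemma binomial_pmf_Suc_ratio:
  assumes "0 \<le> p" "p \<le> 1" "j < k"
  shows "pmf (binomial_pmf k p) (Suc j) * real (Suc j) * (1 - p)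
         = pmf (binomial_pmf k p) j * real (k - j) * p"
proof -
  define r where "r = k - Suc j"
  have k: "k - Suc j = r" "k - j = Suc r"
    using assms(3) unfolding r_def by simp_all
  have "pmf (binomial_pmf k p) (Suc j) * real (Suc j) * (1 - p)
        = real (Suc j * (k choose Suc j)) * p ^ j * p * ((1 - p) ^ r * (1 - p))"
    using assms(1,2) by (simp add: k algebra_simps del: binomial_Suc_Suc)
  also have "\<dots> = real ((k - j) * (k choose j)) * p ^ j * p * ((1 - p) ^ r * (1 - p))"
    by (simp only: Suc_times_binomial_diff)
  also have "\<dots> = pmf (binomial_pmf k p) j * real (k - j) * p"
    using assms(1,2) by (simp add: k algebra_simps del: binomial_Suc_Suc)
  finally show ?thesis .
qed

lemma expectation_binomial_pmf_real:
  assumes "0 \<le> p" "p \<le> 1"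
  shows "measure_pmf.expectation (binomial_pmf k p) real = real k * p"
proof (cases k)
  case 0
  then show ?thesis using assms by (simp add: binomial_pmf_0)
next
  case (Suc r)
  have "measure_pmf.expectation (binomial_pmf k p) real
        = (\<Sum>j\<le>Suc r. real (Suc r choose j) * p ^ j * (1 - p) ^ (Suc r - j) * real j)"
    using assms Suc by (simp add: expectation_binomial_pmf')
  also have "\<dots> = (\<Sum>j\<le>r. real (Suc j * (Suc r choose Suc j)) * p ^ Suc j * (1 - p) ^ (r - j))"
    by (subst sum.atMost_Suc_shift) (simp add: algebra_simps del: binomial_Suc_Suc)
  also have "\<dots> = (\<Sum>j\<le>r. real (Suc r) * p * (real (r choose j) * p ^ j * (1 - p) ^ (r - j)))"
    by (simp only: Suc_times_binomial) (simp add: algebra_simps del: binomial_Suc_Suc)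
  also have "\<dots> = real (Suc r) * p * (p + (1 - p)) ^ r"
    by (simp only: binomial_ring sum_distrib_left)
  finally show ?thesis
    using Suc by simp
qed

lemma exists_set_pmf_ge_expectation:
  fixes f :: "'a \<Rightarrow> real"
  assumes "finite (set_pmf M)"
  shows "\<exists>x\<in>set_pmf M. measure_pmf.expectation M f \<le> f x"
proof (rule ccontr)
  let ?E = "measure_pmf.expectation M f"
  assume "\<not> ?thesis"
  then have less: "f x * pmf M x < ?E * pmf M x" if "x \<in> set_pmf M" for x
    using that by (auto simp: pmf_positive)
  have "?E = (\<Sum>x\<in>set_pmf M. f x * pmf M x)"
    using assms by (intro integral_measure_pmf_real) auto
  also have "\<dots> < (\<Sum>x\<in>set_pmf M. ?E * pmf M x)"
    using assms less set_pmf_not_empty by (intro sum_strict_mono) auto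
  also have "\<dots> = ?E"
    using assms by (simp add: sum_distrib_left[symmetric] sum_pmf_eq_1)
  finally show False by simp
qed

text \<open>\<open>pmf N / pmf M\<close> is nondecreasing on \<open>A\<close>, written cross-multiplied so that zeros of
  \<open>pmf M\<close> need no special treatment.\<close>
definition lr_le_on :: "'a::linorder set \<Rightarrow> 'a pmf \<Rightarrow> 'a pmf \<Rightarrow> bool" where
  "lr_le_on A M N \<longleftrightarrow> (\<forall>l\<in>A. \<forall>j\<in>A. l \<le> j \<longrightarrow> pmf M j * pmf N l \<le> pmf N j * pmf M l)"

lemma sum_mono_weight_ratio_le:
  fixes f g \<phi> :: "'a::linorder \<Rightarrow> real"
  assumes "finite S"
    and ratio: "\<And>l j. l \<in> S \<Longrightarrow> j \<in> S \<Longrightarrow> l \<le> j \<Longrightarrow> f j * g l \<le> g j * f l"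
    and "mono \<phi>"
  shows "(\<Sum>j\<in>S. \<phi> j * f j) * (\<Sum>l\<in>S. g l) \<le> (\<Sum>j\<in>S. \<phi> j * g j) * (\<Sum>l\<in>S. f l)"
proof -
  define D where "D j l = \<phi> j * (f j * g l - g j * f l)" for j l
  have "(\<Sum>j\<in>S. \<phi> j * f j) * (\<Sum>l\<in>S. g l) - (\<Sum>j\<in>S. \<phi> j * g j) * (\<Sum>l\<in>S. f l)
        = (\<Sum>j\<in>S. \<Sum>l\<in>S. \<phi> j * f j * g l - \<phi> j * g j * f l)"
    by (simp add: sum_product sum_subtractf[symmetric])
  also have "\<dots> = (\<Sum>j\<in>S. \<Sum>l\<in>S. D j l)"
    by (simp add: D_def algebra_simps)
  finally have diff: "(\<Sum>j\<in>S. \<phi> j * f j) * (\<Sum>l\<in>S. g l) - (\<Sum>j\<in>S. \<phi> j * g j) * (\<Sum>l\<in>S. f l)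
                      = (\<Sum>j\<in>S. \<Sum>l\<in>S. D j l)" .
  have swap: "(\<Sum>j\<in>S. \<Sum>l\<in>S. D j l) = (\<Sum>j\<in>S. \<Sum>l\<in>S. D l j)"
    by (rule sum.swap)
  have "(\<Sum>j\<in>S. \<Sum>l\<in>S. D j l + D l j) \<le> 0"
  proof (intro sum_nonpos)
    fix j l assume "j \<in> S" "l \<in> S"
    \<comment> \<open>\<open>D j l + D l j = (\<phi> j - \<phi> l) (f j g l - g j f l)\<close>, and the two factors have opposite signs\<close>
    have "(\<phi> j - \<phi> l) * (f j * g l - g j * f l) \<le> 0"
    proof (cases "l \<le> j")
      case True
      then show ?thesis
        using ratio[OF \<open>l \<in> S\<close> \<open>j \<in> S\<close>] monoD[OF \<open>mono \<phi>\<close>] by (simp add: mult_nonneg_nonpos)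
    next
      case False
      then show ?thesis
        using ratio[OF \<open>j \<in> S\<close> \<open>l \<in> S\<close>] monoD[OF \<open>mono \<phi>\<close>, of j l]
        by (simp add: mult_nonpos_nonneg mult.commute)
    qed
    then show "D j l + D l j \<le> 0"
      unfolding D_def by (simp add: algebra_simps)
  qed
  then show ?thesis
    using diff swap by (simp add: sum.distrib)
qed

lemma expectation_cond_pmf_eq_sum:
  fixes f :: "'a \<Rightarrow> real"
  assumes "finite S" "set_pmf M \<inter> A \<subseteq> S" "S \<subseteq> A" "set_pmf M \<inter> A \<noteq> {}"
  shows "measure_pmf.expectation (cond_pmf M A) f = (\<Sum>x\<in>S. f x * pmf M x) / (\<Sum>x\<in>S. pmf M x)"
proof -
  have "A \<inter> set_pmf M = S \<inter> set_pmf M"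
    using assms(2,3) by blast
  then have prob_A: "measure_pmf.prob M A = (\<Sum>x\<in>S. pmf M x)"
    using assms(1) measure_Int_set_pmf[of M A] measure_Int_set_pmf[of M S]
    by (simp add: measure_measure_pmf_finite)
  have "measure_pmf.expectation (cond_pmf M A) f = (\<Sum>x\<in>S. f x * pmf (cond_pmf M A) x)"
    using assms by (intro integral_measure_pmf_real) auto
  also have "\<dots> = (\<Sum>x\<in>S. f x * pmf M x / measure_pmf.prob M A)"
    using assms(3) by (intro sum.cong) (auto simp: pmf_cond[OF assms(4)])
  finally show ?thesis
    by (simp add: prob_A sum_divide_distrib)
qed

lemma expectation_cond_pmf_mono_if_lr_le_on:
  fixes M N :: "'a::linorder pmf" and f :: "'a \<Rightarrow> real"
  assumes "finite (set_pmf M)" "finite (set_pmf N)"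
    and "set_pmf M \<inter> A \<noteq> {}" "set_pmf N \<inter> A \<noteq> {}"
    and "lr_le_on A M N" "mono f"
  shows "measure_pmf.expectation (cond_pmf M A) f \<le> measure_pmf.expectation (cond_pmf N A) f"
proof -
  define S where "S = A \<inter> (set_pmf M \<union> set_pmf N)"
  have S: "finite S" "S \<subseteq> A" "set_pmf M \<inter> A \<subseteq> S" "set_pmf N \<inter> A \<subseteq> S"
    using assms(1,2) unfolding S_def by auto
  have pos: "0 < (\<Sum>x\<in>S. pmf K x)" if K: "set_pmf K \<inter> A \<noteq> {}" "set_pmf K \<inter> A \<subseteq> S" for K
  proof -
    obtain x where "x \<in> set_pmf K \<inter> A" using K(1) by blast
    then show ?thesis
      using K(2) S(1) by (intro sum_pos2[of S x]) (auto simp: pmf_positive)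
  qed
  have "(\<Sum>j\<in>S. f j * pmf M j) * (\<Sum>l\<in>S. pmf N l)
                 \<le> (\<Sum>j\<in>S. f j * pmf N j) * (\<Sum>l\<in>S. pmf M l)"
    using S assms(5,6) unfolding lr_le_on_def by (intro sum_mono_weight_ratio_le) blast+
  then show ?thesis
    using pos[of M] pos[of N] S assms(3,4)
    by (simp add: expectation_cond_pmf_eq_sum[of S] field_simps)
qed

lemma st_le_cond_pmf_if_lr_le_on:
  fixes M N :: "nat pmf"
  assumes "finite (set_pmf M)" "finite (set_pmf N)"
    and "set_pmf M \<inter> A \<noteq> {}" "set_pmf N \<inter> A \<noteq> {}"
    and "lr_le_on A M N"
  shows "st_le (cond_pmf M A) (cond_pmf N A)"
  unfolding st_le_def
proof
  fix t :: real
  have "mono (indicator {x. t \<le> real x} :: nat \<Rightarrow> real)"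
    by (auto intro!: monoI simp: indicator_def)
  from expectation_cond_pmf_mono_if_lr_le_on[OF assms this]
  show "measure_pmf.prob (cond_pmf M A) {x. t \<le> real x} \<le> measure_pmf.prob (cond_pmf N A) {x. t \<le> real x}"
    by simp
qed

lemma hyp_binomial_ratio_bound:
  assumes "j < i" "i < n" "real i * real k / real n \<le> real j"
  shows "real (i - j) * (1 - real i / real n) < real (n - i + Suc j - k) * (real i / real n)"
proof -
  define c where "c = real (n - i + Suc j - k)"
  have n: "0 < real n" using assms by simp
  have "real i * real k \<le> real j * real n"
    using assms(3) n by (simp add: field_simps)
  moreover have "real n + real j + 1 - real i - real k \<le> c"
    unfolding c_def by (cases "i + k \<le> n + Suc j") (simp_all add: of_nat_diff)
  then have "real i * (real n + real j + 1 - real i - real k) \<le> real i * c"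
    by (rule mult_left_mono) simp
  ultimately have "real (i - j) * (real n - real i) < c * real i"
    using assms(1) by (simp add: of_nat_diff algebra_simps)
  then have "real (i - j) * (real n - real i) / real n < c * real i / real n"
    using n by (rule divide_strict_right_mono)
  then show ?thesis
    using n unfolding c_def by (simp add: diff_divide_distrib right_diff_distrib)
qed

text \<open>Multiplied by \<open>(j+1)(n-i-k+j+1)(1-p)\<close>, both sides become multiples of \<open>h j b j (k-j)\<close>
  by the consecutive-ratio identities, which reduces the claim to \<open>hyp_binomial_ratio_bound\<close>.\<close>
lemma hyp_binomial_ratio_step:
  assumes "i < n" "k \<le> n" "j < k" "real i * real k / real n \<le> real j"
  defines "H \<equiv> pmf (hyp_pmf n i k)" and "B \<equiv> pmf (binomial_pmf k (real i / real n))"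
  shows "H (Suc j) * B j \<le> B (Suc j) * H j"
proof (cases "j < i")
  case False
  then have "H (Suc j) = 0"
    using assms pmf_hyp_pmf[of i n k "Suc j"] unfolding H_def by simp
  then show ?thesis
    unfolding B_def H_def by simp
next
  case True
  define p c where "p = real i / real n" and "c = real (n - i + Suc j - k)"
  have p: "0 < p" "p < 1"
    using assms True unfolding p_def by simp_all
  have key: "real (i - j) * (1 - p) < c * p"
    unfolding p_def c_def using True assms by (intro hyp_binomial_ratio_bound) simp_all
  moreover have "0 \<le> real (i - j) * (1 - p)"
    using p by simp
  ultimately have "0 < c * p"
    by linarith
  then have "0 < c"
    using p by (simp add: zero_less_mult_iff)
  have hyp_ratio: "H (Suc j) * real (Suc j) * c = H j * real (k - j) * real (i - j)"
    unfolding H_def c_def using assms by (intro hyp_pmf_Suc_ratio) simp_all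
  have bin_ratio: "B (Suc j) * real (Suc j) * (1 - p) = B j * real (k - j) * p"
    unfolding B_def p_def using assms by (intro binomial_pmf_Suc_ratio) simp_all
  have "H (Suc j) * B j * (real (Suc j) * c * (1 - p))
        = (H (Suc j) * real (Suc j) * c) * B j * (1 - p)" by (simp only: mult_ac)
  also have "\<dots> = H j * B j * real (k - j) * (real (i - j) * (1 - p))"
    using hyp_ratio by (simp add: mult_ac)
  also have "\<dots> \<le> H j * B j * real (k - j) * (c * p)"
    using key by (intro mult_left_mono) (simp_all add: H_def B_def)
  also have "\<dots> = (B (Suc j) * real (Suc j) * (1 - p)) * H j * c"
    using bin_ratio by (simp add: mult_ac)
  also have "\<dots> = B (Suc j) * H j * (real (Suc j) * c * (1 - p))" by (simp only: mult_ac)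
  finally show ?thesis
    using \<open>0 < c\<close> p by (simp add: mult_le_cancel_right)
qed

lemma likelihood_ratio_chain:
  fixes f g :: "nat \<Rightarrow> real"
  assumes "l \<le> j"
    and "\<And>m. l \<le> m \<Longrightarrow> m < j \<Longrightarrow> f (Suc m) * g m \<le> g (Suc m) * f m"
    and "\<And>m. l \<le> m \<Longrightarrow> m \<le> j \<Longrightarrow> 0 < g m"
  shows "f j * g l \<le> g j * f l"
  using assms
proof (induction j)
  case 0
  then show ?case by (simp add: mult.commute)
next
  case (Suc m)
  show ?case
  proof (cases "l = Suc m")
    case True
    then show ?thesis by (simp add: mult.commute)
  next
    case False
    with Suc.prems have "l \<le> m" by simp
    with Suc have IH: "f m * g l \<le> g m * f l" by simp
    have pos: "0 < g l" "0 < g m" "0 < g (Suc m)"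
      using Suc.prems(3) \<open>l \<le> m\<close> by simp_all
    have "f (Suc m) * g l * g m = (f (Suc m) * g m) * g l" by (simp only: mult_ac)
    also have "\<dots> \<le> (g (Suc m) * f m) * g l"
      using Suc.prems(2)[of m] \<open>l \<le> m\<close> pos by (intro mult_right_mono) simp_all
    also have "\<dots> = g (Suc m) * (f m * g l)" by (simp only: mult_ac)
    also have "\<dots> \<le> g (Suc m) * (g m * f l)"
      using IH pos by (intro mult_left_mono) simp_all
    finally show ?thesis
      using pos by (simp add: mult_ac)
  qed
qed

lemma lr_le_on_hyp_pmf_binomial_pmf:
  assumes "0 < i" "i \<le> n" "k \<le> n"
  shows "lr_le_on {x. real i * real k / real n \<le> real x} (hyp_pmf n i k) (binomial_pmf k (real i / real n))"
  unfolding lr_le_on_def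
proof (intro ballI impI)
  define H B where "H = pmf (hyp_pmf n i k)" and "B = pmf (binomial_pmf k (real i / real n))"
  fix l j assume "l \<in> {x. real i * real k / real n \<le> real x}" "l \<le> j"
  then have l: "real i * real k / real n \<le> real l" by simp
  show "H j * B l \<le> B j * H l"
  proof (cases "i = n")
    case True
    then have "hyp_pmf n i k = binomial_pmf k (real i / real n)"
      using assms by (simp add: hyp_pmf_all_black binomial_pmf_1)
    then show ?thesis by (simp add: H_def B_def mult.commute)
  next
    case False
    show ?thesis
    proof (cases "j \<le> k")
      case False
      then have "H j = 0"
        using set_pmf_hyp_pmf_subset[OF assms(3), of i] unfolding H_def pmf_eq_0_set_pmf by auto
      then show ?thesis by (simp add: B_def H_def)
    next
      case True
      have "0 < real i / real n" "real i / real n < 1"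
        using assms \<open>i \<noteq> n\<close> by simp_all
      then have B_pos: "0 < B m" if "m \<le> k" for m
        using that by (simp add: B_def pmf_positive_iff)
      show ?thesis
      proof (rule likelihood_ratio_chain[OF \<open>l \<le> j\<close>])
        fix m assume "l \<le> m" "m < j"
        then show "H (Suc m) * B m \<le> B (Suc m) * H m"
          unfolding H_def B_def using assms \<open>i \<noteq> n\<close> True l
          by (intro hyp_binomial_ratio_step) simp_all
      next
        fix m assume "l \<le> m" "m \<le> j"
        then show "0 < B m"
          using B_pos True by simp
      qed
    qed
  qed
qed

theorem lemma6:
  fixes n i k :: nat
  assumes "1 \<le> k" and "k \<le> n" and "1 \<le> i" and "i \<le> n"
  defines "H \<equiv> hyp_pmf n i k"
      and "X \<equiv> binomial_pmf k (real i / real n)"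
      and "A \<equiv> {x::nat. real x \<ge> real i * real k / real n}"
  shows "st_le (cond_pmf H A) (cond_pmf X A) \<and>
         measure_pmf.expectation (cond_pmf H {x. real x \<ge> measure_pmf.expectation H real}) real
         \<le> measure_pmf.expectation (cond_pmf X {x. real x \<ge> measure_pmf.expectation X real}) real"
proof -
  have p: "0 \<le> real i / real n" "real i / real n \<le> 1"
    using assms by simp_all
  have mean: "measure_pmf.expectation H real = real i * real k / real n"
             "measure_pmf.expectation X real = real i * real k / real n"
    unfolding H_def X_def using assms p by (simp_all add: expectation_hyp_pmf expectation_binomial_pmf_real)
  have fin: "finite (set_pmf H)" "finite (set_pmf X)"
    unfolding H_def X_def using set_pmf_hyp_pmf_subset[OF assms(2)] p
    by (auto intro: finite_subset)
  have ne: "set_pmf H \<inter> A \<noteq> {}" "set_pmf X \<inter> A \<noteq> {}"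
    using exists_set_pmf_ge_expectation[OF fin(1), of real]
          exists_set_pmf_ge_expectation[OF fin(2), of real]
    unfolding mean A_def by auto
  have lr: "lr_le_on A H X"
    unfolding A_def H_def X_def using assms by (intro lr_le_on_hyp_pmf_binomial_pmf) simp_all
  have "mono (real :: nat \<Rightarrow> real)"
    by (rule monoI) simp
  with lr have "st_le (cond_pmf H A) (cond_pmf X A)"
    "measure_pmf.expectation (cond_pmf H A) real \<le> measure_pmf.expectation (cond_pmf X A) real"
    using fin ne by (simp_all add: st_le_cond_pmf_if_lr_le_on expectation_cond_pmf_mono_if_lr_le_on)
  then show ?thesis
    unfolding mean A_def by simp
qed

end
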